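(* Let $\mathbf{X}$ be a finite tournament isomorphic to an induced subtournament of $\mathbf{S}(2)$. Then every extension of $\mathbf{X}$ in $\mathcal{P}_2$ embeds into every extension of $\mathbf{S}(2)$.
   Context: $\mathbf{S}(2)$ is the tournament whose vertices are the points of the unit circle of $\mathbb{C}$ with rational argument, with an arc from $x$ to $y$ iff $0<\arg(y/x)<\pi$. For a structure $\mathbf{A}=(A,<^{\mathbf{A}},P_1,P_2)$ with $<^{\mathbf{A}}$ a linear order on $A$ and $(P_1,P_2)$ a partition of $A$, writing $a\sim b$ when $a,b$ lie in the same part, $p(\mathbf{A})$ is the tournament on $A$ with an arc from $a$ to $b$ iff either ($a\sim b$ and $a<^{\mathbf{A}}b$) or ($a\not\sim b$ and $b<^{\mathbf{A}}a$). An extension of a tournament $\mathbf{X}$ is any such $\mathbf{A}$ with $p(\mathbf{A})=\mathbf{X}$; $\mathcal{P}_2$ is the class of finite such structures. In particular an extension of $\mathbf{S}(2)$ is a structure $(\mathbf{S}(2),<,B_1,B_2)$ with $p$ of it equal to $\mathbf{S}(2)$. An embedding is an order-preserving injection mapping $P_i$ into $B_i$ and the complement of $P_i$ into the complement of $B_i$. *)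

theory Defs
  imports "HOL-Analysis.Analysis"
begin

definition tournament :: "'a set \<Rightarrow> ('a \<Rightarrow> 'a \<Rightarrow> bool) \<Rightarrow> bool" where
  "tournament V E \<longleftrightarrow>
     (\<forall>x\<in>V. \<not> E x x) \<and>
     (\<forall>x\<in>V. \<forall>y\<in>V. x \<noteq> y \<longrightarrow> (E x y \<longleftrightarrow> \<not> E y x))"

definition S2_vert :: "complex set" where
  "S2_vert = {cis (of_rat q) | q. True}"

definition S2_arc :: "complex \<Rightarrow> complex \<Rightarrow> bool" where
  "S2_arc x y \<longleftrightarrow> 0 < Arg (y / x) \<and> Arg (y / x) < pi"

definition strict_linear_order_on :: "'a set \<Rightarrow> ('a \<Rightarrow> 'a \<Rightarrow> bool) \<Rightarrow> bool" where
  "strict_linear_order_on A lt \<longleftrightarrow>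
     (\<forall>x\<in>A. \<not> lt x x) \<and>
     (\<forall>x\<in>A. \<forall>y\<in>A. \<forall>z\<in>A. lt x y \<longrightarrow> lt y z \<longrightarrow> lt x z) \<and>
     (\<forall>x\<in>A. \<forall>y\<in>A. x \<noteq> y \<longrightarrow> lt x y \<or> lt y x)"

definition partition2 :: "'a set \<Rightarrow> 'a set \<Rightarrow> 'a set \<Rightarrow> bool" where
  "partition2 A P1 P2 \<longleftrightarrow> P1 \<union> P2 = A \<and> P1 \<inter> P2 = {}"

definition p_arc :: "('a \<Rightarrow> 'a \<Rightarrow> bool) \<Rightarrow> 'a set \<Rightarrow> 'a set \<Rightarrow> 'a \<Rightarrow> 'a \<Rightarrow> bool" where
  "p_arc lt P1 P2 a b \<longleftrightarrow>
     (((a \<in> P1 \<and> b \<in> P1) \<or> (a \<in> P2 \<and> b \<in> P2)) \<and> lt a b) \<or>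
     (\<not> ((a \<in> P1 \<and> b \<in> P1) \<or> (a \<in> P2 \<and> b \<in> P2)) \<and> lt b a)"

definition is_extension ::
  "'a set \<Rightarrow> ('a \<Rightarrow> 'a \<Rightarrow> bool) \<Rightarrow> ('a \<Rightarrow> 'a \<Rightarrow> bool) \<Rightarrow> 'a set \<Rightarrow> 'a set \<Rightarrow> bool" where
  "is_extension A E lt P1 P2 \<longleftrightarrow>
     strict_linear_order_on A lt \<and> partition2 A P1 P2 \<and>
     (\<forall>a\<in>A. \<forall>b\<in>A. E a b \<longleftrightarrow> p_arc lt P1 P2 a b)"

definition struct_embedding ::
  "('a \<Rightarrow> 'b) \<Rightarrow> 'a set \<Rightarrow> ('a \<Rightarrow> 'a \<Rightarrow> bool) \<Rightarrow> 'a set \<Rightarrow> 'a set \<Rightarrow>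
   'b set \<Rightarrow> ('b \<Rightarrow> 'b \<Rightarrow> bool) \<Rightarrow> 'b set \<Rightarrow> 'b set \<Rightarrow> bool" where
  "struct_embedding f A lt P1 P2 B lt' Q1 Q2 \<longleftrightarrow>
     inj_on f A \<and> f ` A \<subseteq> B \<and>
     (\<forall>a\<in>A. \<forall>b\<in>A. lt a b \<longleftrightarrow> lt' (f a) (f b)) \<and>
     (\<forall>a\<in>A. a \<in> P1 \<longleftrightarrow> f a \<in> Q1) \<and>
     (\<forall>a\<in>A. a \<in> P2 \<longleftrightarrow> f a \<in> Q2)"

end

theory Submission
  imports Defs
begin

text \<open>In an extension \<open>(S(2),<,B\<^sub>1,B\<^sub>2)\<close>, replacing each point of \<open>B\<^sub>2\<close> by its antipode
  turns \<open><\<close> into the arc relation of the circle. If \<open>x < z\<close>, the images of \<open>x\<close> and \<open>z\<close> bound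
  an arc shorter than a half circle, and every vertex whose image lies on that arc lies between
  \<open>x\<close> and \<open>z\<close>. Rational arguments are dense, so the arc contains a vertex (which then lies in
  \<open>B\<^sub>1\<close>) and the antipode of a vertex (which then lies in \<open>B\<^sub>2\<close>): both colours are dense in \<open><\<close>.
  A finite linearly ordered 2-coloured set embeds into any such order, maximum first.\<close>

lemma strict_linear_order_on_irrefl:
  "strict_linear_order_on A lt \<Longrightarrow> x \<in> A \<Longrightarrow> \<not> lt x x"
  unfolding strict_linear_order_on_def by simp

lemma strict_linear_order_on_trans:
  "strict_linear_order_on A lt \<Longrightarrow> x \<in> A \<Longrightarrow> y \<in> A \<Longrightarrow> z \<in> A \<Longrightarrow> lt x y \<Longrightarrow> lt y z
    \<Longrightarrow> lt x z"
  unfolding strict_linear_order_on_def by blast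

lemma strict_linear_order_on_asym:
  assumes "strict_linear_order_on A lt" "x \<in> A" "y \<in> A" "lt x y"
  shows "\<not> lt y x"
  using strict_linear_order_on_trans[OF assms(1,2,3,2) assms(4)]
    strict_linear_order_on_irrefl[OF assms(1,2)] by blast

lemma strict_linear_order_on_total:
  "strict_linear_order_on A lt \<Longrightarrow> x \<in> A \<Longrightarrow> y \<in> A \<Longrightarrow> x \<noteq> y \<Longrightarrow> lt x y \<or> lt y x"
  unfolding strict_linear_order_on_def by blast

lemma strict_linear_order_on_subset:
  "strict_linear_order_on A lt \<Longrightarrow> B \<subseteq> A \<Longrightarrow> strict_linear_order_on B lt"
  unfolding strict_linear_order_on_def by (meson subsetD)

lemma strict_linear_order_on_finite_has_max:
  assumes "finite A" "A \<noteq> {}" "strict_linear_order_on A lt"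
  shows "\<exists>m\<in>A. \<forall>y\<in>A - {m}. lt y m"
  using assms
proof (induction A rule: finite_ne_induct)
  case (singleton x)
  then show ?case by simp
next
  case (insert x F)
  note slo = \<open>strict_linear_order_on (insert x F) lt\<close>
  obtain m where m: "m \<in> F" "\<forall>y\<in>F - {m}. lt y m"
    using insert.IH strict_linear_order_on_subset[OF slo] by blast
  have "x \<noteq> m" using insert.hyps m(1) by blast
  then consider "lt m x" | "lt x m"
    using strict_linear_order_on_total[OF slo, of m x] m(1) by blast
  then show ?case
  proof cases
    case 1
    then have "\<forall>y\<in>insert x F - {x}. lt y x"
      using m strict_linear_order_on_trans[OF slo, of _ m x] by blast
    then show ?thesis by blast
  next
    case 2
    then show ?thesis using m by blast
  qed
qed

lemma struct_embedding_extend_max: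
  assumes slo_A: "strict_linear_order_on A lt" and slo_B: "strict_linear_order_on B lt'"
    and m: "m \<in> A" "\<forall>y\<in>A - {m}. lt y m"
    and f0: "struct_embedding f0 (A - {m}) lt P1 P2 B lt' Q1 Q2"
    and f0_less_d: "\<forall>x\<in>A - {m}. lt' (f0 x) d"
    and d: "d \<in> B" "m \<in> P1 \<longleftrightarrow> d \<in> Q1" "m \<in> P2 \<longleftrightarrow> d \<in> Q2"
  shows "struct_embedding (f0(m := d)) A lt P1 P2 B lt' Q1 Q2"
proof -
  define f where "f = f0(m := d)"
  have f0_inj: "inj_on f0 (A - {m})"
    and f0_B: "\<And>x. x \<in> A - {m} \<Longrightarrow> f0 x \<in> B"
    and f0_less_iff: "\<And>x y. x \<in> A - {m} \<Longrightarrow> y \<in> A - {m} \<Longrightarrow> lt x y \<longleftrightarrow> lt' (f0 x) (f0 y)"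
    and f0_colour: "\<And>x. x \<in> A - {m} \<Longrightarrow> (x \<in> P1 \<longleftrightarrow> f0 x \<in> Q1) \<and> (x \<in> P2 \<longleftrightarrow> f0 x \<in> Q2)"
    using f0 unfolding struct_embedding_def by blast+
  have f_rest: "f x = f0 x" if "x \<in> A - {m}" for x
    using that unfolding f_def by simp
  have f_m: "f m = d" unfolding f_def by simp
  have not_m_less: "\<not> lt m y" if "y \<in> A" for y
    using that m strict_linear_order_on_irrefl[OF slo_A m(1)]
      strict_linear_order_on_asym[OF slo_A that m(1)] by blast
  have not_d_less: "\<not> lt' d (f0 y)" if "y \<in> A - {m}" for y
    using that f0_less_d strict_linear_order_on_asym[OF slo_B f0_B[OF that] d(1)] by blast
  have d_not_f0: "d \<noteq> f0 x" if "x \<in> A - {m}" for x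
    using f0_less_d that strict_linear_order_on_irrefl[OF slo_B d(1)] by auto
  have "struct_embedding f A lt P1 P2 B lt' Q1 Q2"
    unfolding struct_embedding_def
  proof (intro conjI)
    have "inj_on f (A - {m})" using f0_inj inj_on_cong[of "A - {m}" f f0] f_rest by blast
    moreover have "f m \<notin> f ` (A - {m})" using f_rest f_m d_not_f0 by auto
    ultimately show "inj_on f A" using inj_on_insert[of f m "A - {m}"] m(1) by (simp add: insert_absorb)
    have "f x \<in> B" if "x \<in> A" for x using that f0_B d(1) f_rest f_m by (cases "x = m") auto
    then show "f ` A \<subseteq> B" by blast
    show "\<forall>x\<in>A. \<forall>y\<in>A. lt x y \<longleftrightarrow> lt' (f x) (f y)"
    proof (intro ballI)
      fix x y assume "x \<in> A" "y \<in> A"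
      then consider "x = m" "y = m" | "x = m" "y \<in> A - {m}" | "x \<in> A - {m}" "y = m"
        | "x \<in> A - {m}" "y \<in> A - {m}" by blast
      then show "lt x y \<longleftrightarrow> lt' (f x) (f y)"
      proof cases
        case 1
        then show ?thesis
          using not_m_less[OF m(1)] f_m strict_linear_order_on_irrefl[OF slo_B d(1)] by simp
      next
        case 2
        then show ?thesis using not_m_less[of y] not_d_less[of y] f_m f_rest by simp
      next
        case 3
        then show ?thesis using m(2) f0_less_d f_m f_rest by simp
      next
        case 4
        then show ?thesis using f0_less_iff f_rest by simp
      qed
    qed
    have "(x \<in> P1 \<longleftrightarrow> f x \<in> Q1) \<and> (x \<in> P2 \<longleftrightarrow> f x \<in> Q2)" if "x \<in> A" for x
      using that f0_colour d(2,3) f_rest f_m by (cases "x = m") auto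
    then show "\<forall>x\<in>A. x \<in> P1 \<longleftrightarrow> f x \<in> Q1" "\<forall>x\<in>A. x \<in> P2 \<longleftrightarrow> f x \<in> Q2" by blast+
  qed
  then show ?thesis unfolding f_def .
qed

definition colours_dense :: "'a set \<Rightarrow> ('a \<Rightarrow> 'a \<Rightarrow> bool) \<Rightarrow> 'a set \<Rightarrow> 'a set \<Rightarrow> bool" where
  "colours_dense B lt Q1 Q2 \<longleftrightarrow>
     (\<forall>x\<in>B. \<forall>z\<in>B. lt x z \<longrightarrow> (\<exists>y\<in>Q1. lt x y \<and> lt y z) \<and> (\<exists>y\<in>Q2. lt x y \<and> lt y z))"

text \<open>The interval \<open>(a,b)\<close> is carried through the induction so that the remaining elements
  can be placed below the image of the maximum.\<close>

lemma finite_embeds_into_colours_dense: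
  assumes slo_B: "strict_linear_order_on B lt'" and part_B: "partition2 B Q1 Q2"
    and dense: "colours_dense B lt' Q1 Q2"
    and "finite A" and "strict_linear_order_on A lt" and "\<forall>x\<in>A. x \<in> P1 \<longleftrightarrow> x \<notin> P2"
    and "a \<in> B" "b \<in> B" "lt' a b"
  shows "\<exists>f. struct_embedding f A lt P1 P2 B lt' Q1 Q2 \<and> (\<forall>x\<in>A. lt' a (f x) \<and> lt' (f x) b)"
  using assms(4-)
proof (induction "card A" arbitrary: A b)
  case 0
  then have "A = {}" by simp
  then show ?case unfolding struct_embedding_def by simp
next
  case (Suc n)
  note slo_A = \<open>strict_linear_order_on A lt\<close>
  obtain m where m: "m \<in> A" "\<forall>y\<in>A - {m}. lt y m"
    using strict_linear_order_on_finite_has_max[OF \<open>finite A\<close> _ slo_A] Suc.hyps(2) by fastforce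
  obtain d where d: "d \<in> B" "lt' a d" "lt' d b" "m \<in> P1 \<longleftrightarrow> d \<in> Q1" "m \<in> P2 \<longleftrightarrow> d \<in> Q2"
  proof -
    have "(\<exists>y\<in>Q1. lt' a y \<and> lt' y b) \<and> (\<exists>y\<in>Q2. lt' a y \<and> lt' y b)"
      using dense \<open>a \<in> B\<close> \<open>b \<in> B\<close> \<open>lt' a b\<close> unfolding colours_dense_def by blast
    then show ?thesis
      using that part_B \<open>\<forall>x\<in>A. x \<in> P1 \<longleftrightarrow> x \<notin> P2\<close> m(1) unfolding partition2_def by blast
  qed
  obtain f0 where f0: "struct_embedding f0 (A - {m}) lt P1 P2 B lt' Q1 Q2"
    and f0_between: "\<forall>x\<in>A - {m}. lt' a (f0 x) \<and> lt' (f0 x) d"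
  proof -
    have "n = card (A - {m})" using Suc.hyps(2) \<open>finite A\<close> m(1) by simp
    then show ?thesis
      using that Suc.hyps(1)[of "A - {m}" d] Suc.prems m(1) d(1,2)
        strict_linear_order_on_subset[OF slo_A, of "A - {m}"] by auto
  qed
  have "struct_embedding (f0(m := d)) A lt P1 P2 B lt' Q1 Q2"
    using struct_embedding_extend_max[OF slo_A slo_B m f0 _ d(1,4,5)] f0_between by blast
  moreover have "lt' a ((f0(m := d)) x) \<and> lt' ((f0(m := d)) x) b" if "x \<in> A" for x
  proof (cases "x = m")
    case False
    then have "x \<in> A - {m}" using that by blast
    moreover have "f0 x \<in> B" using f0 \<open>x \<in> A - {m}\<close> unfolding struct_embedding_def by blast
    ultimately show ?thesis
      using False f0_between strict_linear_order_on_trans[OF slo_B _ d(1) \<open>b \<in> B\<close>] d(3) by auto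
  qed (use d in simp)
  ultimately show ?case by blast
qed

lemma Im_inverse_pos_iff: "0 < Im (inverse z) \<longleftrightarrow> Im z < 0"
proof -
  have "Im z \<noteq> 0 \<Longrightarrow> 0 < (Re z)\<^sup>2 + (Im z)\<^sup>2" by (simp add: sum_power2_gt_zero_iff)
  then show ?thesis
    by (cases "Im z = 0") (auto simp: zero_less_divide_iff divide_less_0_iff)
qed

lemma S2_arc_iff_Im_pos: "S2_arc x y \<longleftrightarrow> 0 < Im (y / x)"
  unfolding S2_arc_def using Arg_lt_pi by blast

lemma S2_arc_swap_iff_Im_neg: "S2_arc y x \<longleftrightarrow> Im (y / x) < 0"
proof -
  have "x / y = inverse (y / x)" by simp
  then show ?thesis unfolding S2_arc_iff_Im_pos by (metis Im_inverse_pos_iff)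
qed

lemma S2_arc_minus_left: "S2_arc (-x) y \<longleftrightarrow> S2_arc y x"
  unfolding S2_arc_swap_iff_Im_neg[of y x] S2_arc_iff_Im_pos[of "-x" y] by simp

lemma S2_arc_minus_right: "S2_arc x (-y) \<longleftrightarrow> S2_arc y x"
  unfolding S2_arc_swap_iff_Im_neg[of y x] S2_arc_iff_Im_pos[of x "-y"] by simp

lemma S2_arc_cis: "S2_arc (cis a) (cis b) \<longleftrightarrow> 0 < sin (b - a)"
  unfolding S2_arc_iff_Im_pos by (simp add: cis_divide)

lemma cis_in_S2_vert: "r \<in> \<rat> \<Longrightarrow> cis r \<in> S2_vert"
  unfolding S2_vert_def by (auto elim!: Rats_cases)

lemma S2_vert_neq_minus: "w \<in> S2_vert \<Longrightarrow> w \<noteq> - w"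
  unfolding S2_vert_def by auto

lemma S2_arc_cis_interval:
  fixes \<alpha> \<gamma> :: real
  assumes "S2_arc (cis \<alpha>) (cis \<gamma>)"
  obtains d where "0 < d"
    "\<And>t. \<alpha> < t \<Longrightarrow> t < \<alpha> + d \<Longrightarrow> S2_arc (cis \<alpha>) (cis t) \<and> S2_arc (cis t) (cis \<gamma>)"
proof -
  define d where "d = Arg (cis (\<gamma> - \<alpha>))"
  have "0 < sin (\<gamma> - \<alpha>)" using assms by (simp add: S2_arc_cis)
  then have "0 < d \<and> d < pi" unfolding d_def by (simp add: Arg_lt_pi)
  then have d: "0 < d" "d < pi" by auto
  have cis_d: "cis d = cis (\<gamma> - \<alpha>)" unfolding d_def by (simp add: cis_Arg)
  have "sin d = sin (\<gamma> - \<alpha>)" "cos d = cos (\<gamma> - \<alpha>)"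
    using arg_cong[OF cis_d, of Im] arg_cong[OF cis_d, of Re] by simp_all
  then have "sin (\<gamma> - t) = sin (d - (t - \<alpha>))" for t
    using sin_diff[of "\<gamma> - \<alpha>" "t - \<alpha>"] sin_diff[of d "t - \<alpha>"] by simp
  moreover have "0 < sin (t - \<alpha>)" "0 < sin (d - (t - \<alpha>))" if "\<alpha> < t" "t < \<alpha> + d" for t
    using that d by (auto intro: sin_gt_zero)
  ultimately show ?thesis using that d(1) by (simp add: S2_arc_cis)
qed

definition antipode_unless :: "complex set \<Rightarrow> complex \<Rightarrow> complex" where
  "antipode_unless B u = (if u \<in> B then u else - u)"

lemma S2_extension_less_iff_arc:
  assumes ext: "is_extension S2_vert S2_arc lt B1 B2" and "u \<in> S2_vert" "v \<in> S2_vert"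
  shows "lt u v \<longleftrightarrow> S2_arc (antipode_unless B1 u) (antipode_unless B1 v)"
proof -
  have "S2_arc a b \<longleftrightarrow> p_arc lt B1 B2 a b" if "a \<in> S2_vert" "b \<in> S2_vert" for a b
    using ext that unfolding is_extension_def by blast
  moreover have "B1 \<union> B2 = S2_vert" "B1 \<inter> B2 = {}"
    using ext unfolding is_extension_def partition2_def by auto
  ultimately show ?thesis
    using assms(2,3) unfolding antipode_unless_def
    by (cases "u \<in> B1"; cases "v \<in> B1") (auto simp: p_arc_def S2_arc_minus_left S2_arc_minus_right)
qed

text \<open>If the image of \<open>w\<close> were the antipode of \<open>s\<close>, then \<open>z < w < x\<close>, contradicting \<open>x < z\<close>.\<close>

lemma S2_extension_between:
  assumes ext: "is_extension S2_vert S2_arc lt B1 B2"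
    and x: "x \<in> S2_vert" and z: "z \<in> S2_vert" and w: "w \<in> S2_vert" and "lt x z"
    and xs: "S2_arc (antipode_unless B1 x) s" and sz: "S2_arc s (antipode_unless B1 z)"
    and ws: "antipode_unless B1 w = s \<or> antipode_unless B1 w = - s"
  shows "antipode_unless B1 w = s \<and> lt x w \<and> lt w z"
proof (cases "antipode_unless B1 w = s")
  case True
  then show ?thesis
    using xs sz S2_extension_less_iff_arc[OF ext x w] S2_extension_less_iff_arc[OF ext w z] by simp
next
  case False
  have slo: "strict_linear_order_on S2_vert lt" using ext unfolding is_extension_def by simp
  have "antipode_unless B1 w = - s" using False ws by blast
  then have "lt w x" "lt z w"
    using xs sz S2_extension_less_iff_arc[OF ext w x] S2_extension_less_iff_arc[OF ext z w]
    by (simp_all add: S2_arc_minus_left S2_arc_minus_right)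
  then have "lt x x"
    using \<open>lt x z\<close> strict_linear_order_on_trans[OF slo] x z w by meson
  then show ?thesis using strict_linear_order_on_irrefl[OF slo x] by blast
qed

lemma S2_extension_colours_dense:
  assumes ext: "is_extension S2_vert S2_arc lt B1 B2"
  shows "colours_dense S2_vert lt B1 B2"
  unfolding colours_dense_def
proof (intro ballI impI)
  fix x z assume x: "x \<in> S2_vert" and z: "z \<in> S2_vert" and "lt x z"
  have part: "B1 \<union> B2 = S2_vert" using ext unfolding is_extension_def partition2_def by simp
  have "antipode_unless B1 u \<in> {cis r |r. True}" if "u \<in> S2_vert" for u
    using that unfolding S2_vert_def antipode_unless_def by (auto simp: minus_cis)
  then obtain \<alpha> \<gamma> where \<alpha>: "antipode_unless B1 x = cis \<alpha>" and \<gamma>: "antipode_unless B1 z = cis \<gamma>"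
    using x z by blast
  then have "S2_arc (cis \<alpha>) (cis \<gamma>)" using S2_extension_less_iff_arc[OF ext x z] \<open>lt x z\<close> by simp
  then obtain d where "0 < d"
    and on_arc: "\<And>t. \<alpha> < t \<Longrightarrow> t < \<alpha> + d \<Longrightarrow> S2_arc (cis \<alpha>) (cis t) \<and> S2_arc (cis t) (cis \<gamma>)"
    using S2_arc_cis_interval by blast
  have flip: "antipode_unless B1 w = w \<or> antipode_unless B1 w = - w" for w
    unfolding antipode_unless_def by simp
  obtain r1 where r1: "r1 \<in> \<rat>" "\<alpha> < r1" "r1 < \<alpha> + d"
    using Rats_dense_in_real[of \<alpha> "\<alpha> + d"] \<open>0 < d\<close> by auto
  have w1: "cis r1 \<in> S2_vert" using cis_in_S2_vert[OF r1(1)] .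
  have "S2_arc (antipode_unless B1 x) (cis r1) \<and> S2_arc (cis r1) (antipode_unless B1 z)"
    unfolding \<alpha> \<gamma> using on_arc[OF r1(2,3)] .
  then have "antipode_unless B1 (cis r1) = cis r1 \<and> lt x (cis r1) \<and> lt (cis r1) z"
    using S2_extension_between[OF ext x z w1 \<open>lt x z\<close>] flip[of "cis r1"] by blast
  then have "cis r1 \<in> B1 \<and> lt x (cis r1) \<and> lt (cis r1) z"
    using S2_vert_neq_minus[OF w1] unfolding antipode_unless_def by (auto split: if_splits)
  moreover
  obtain r2 where r2: "r2 \<in> \<rat>" "\<alpha> - pi < r2" "r2 < \<alpha> - pi + d"
    using Rats_dense_in_real[of "\<alpha> - pi" "\<alpha> - pi + d"] \<open>0 < d\<close> by auto
  have w2: "cis r2 \<in> S2_vert" using cis_in_S2_vert[OF r2(1)] .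
  have "S2_arc (antipode_unless B1 x) (- cis r2) \<and> S2_arc (- cis r2) (antipode_unless B1 z)"
    unfolding \<alpha> \<gamma> using on_arc[of "r2 + pi"] r2(2,3) by (simp add: minus_cis)
  then have "antipode_unless B1 (cis r2) = - cis r2 \<and> lt x (cis r2) \<and> lt (cis r2) z"
    using S2_extension_between[OF ext x z w2 \<open>lt x z\<close>] flip[of "cis r2"] by (metis minus_minus)
  then have "cis r2 \<in> B2 \<and> lt x (cis r2) \<and> lt (cis r2) z"
    using S2_vert_neq_minus[OF w2] part w2 unfolding antipode_unless_def by (auto split: if_splits)
  ultimately show "(\<exists>y\<in>B1. lt x y \<and> lt y z) \<and> (\<exists>y\<in>B2. lt x y \<and> lt y z)" by blast
qed

lemma S2_vert_two_points: "\<exists>a\<in>S2_vert. \<exists>b\<in>S2_vert. a \<noteq> b"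
proof -
  have "0 < sin (1::real)" using pi_gt3 by (intro sin_gt_zero) auto
  then have "cis 1 \<noteq> cis 0" by (metis cis.sel(2) sin_zero less_irrefl)
  then show ?thesis using cis_in_S2_vert[of 0] cis_in_S2_vert[of 1] by auto
qed

theorem lemma5:
  fixes V :: "'a set" and E :: "'a \<Rightarrow> 'a \<Rightarrow> bool"
  assumes "finite V" and "tournament V E"
    and "\<exists>h. inj_on h V \<and> h ` V \<subseteq> S2_vert \<and>
              (\<forall>a\<in>V. \<forall>b\<in>V. E a b \<longleftrightarrow> S2_arc (h a) (h b))"
  shows "\<forall>lt P1 P2. is_extension V E lt P1 P2 \<longrightarrow>
           (\<forall>lt' B1 B2. is_extension S2_vert S2_arc lt' B1 B2 \<longrightarrow>
              (\<exists>f. struct_embedding f V lt P1 P2 S2_vert lt' B1 B2))"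
proof (intro allI impI)
  fix lt P1 P2 lt' B1 B2
  assume ext_V: "is_extension V E lt P1 P2" and ext_S2: "is_extension S2_vert S2_arc lt' B1 B2"
  have slo_V: "strict_linear_order_on V lt" and colour_V: "\<forall>x\<in>V. x \<in> P1 \<longleftrightarrow> x \<notin> P2"
    using ext_V unfolding is_extension_def partition2_def by auto
  have slo_S2: "strict_linear_order_on S2_vert lt'" and part_S2: "partition2 S2_vert B1 B2"
    using ext_S2 unfolding is_extension_def by auto
  obtain a b where "a \<in> S2_vert" "b \<in> S2_vert" "lt' a b"
    using S2_vert_two_points strict_linear_order_on_total[OF slo_S2] by blast
  then show "\<exists>f. struct_embedding f V lt P1 P2 S2_vert lt' B1 B2"
    using finite_embeds_into_colours_dense[OF slo_S2 part_S2 S2_extension_colours_dense[OF ext_S2]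
        \<open>finite V\<close> slo_V colour_V] by blast
qed

end
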